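(* Let $G\sim G(n,m)$ and fix $\delta\in(0,1)$; assume $1\le m\le(1-\delta)N$. Let $\mu=2m/n$ and let $\lambda=\lambda_n$ be real with $\lambda_n\to0$. Then, as $n\to\infty$, $$\sup_{k}\left|\frac{\mathbb E[e^{\lambda(d_1+d_2-2\mu)}\mid d_3=k]}{\mathbb E[e^{\lambda(d_1+d_2-2\mu)}]}-1\right|\to0,$$ where the supremum is over all $k\in\{0,1,\dots,n-1\}$ with $\mathbb P(d_3=k)>0$.
   Context: $N=\binom n2$; $G(n,m)$ is the uniform distribution over graphs on $[n]$ with exactly $m$ edges, $m=m(n)$. $d_i$ denotes the degree of vertex $i$. *)

theory Defs
  imports "HOL-Analysis.Analysis"
begin

text \<open>Simple graphs on the vertex set [n] = {1..n}, represented by their edge sets: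
  an edge is a 2-element subset of {1..n}.\<close>

definition all_edges :: "nat \<Rightarrow> nat set set" where
  "all_edges n = {e. e \<subseteq> {1..n} \<and> card e = 2}"

definition Gnm :: "nat \<Rightarrow> nat \<Rightarrow> nat set set set" where
  "Gnm n m = {E. E \<subseteq> all_edges n \<and> card E = m}"

definition deg :: "nat set set \<Rightarrow> nat \<Rightarrow> nat" where
  "deg E i = card {e \<in> E. i \<in> e}"

definition Gprob :: "nat \<Rightarrow> nat \<Rightarrow> (nat set set \<Rightarrow> bool) \<Rightarrow> real" where
  "Gprob n m P = real (card {E \<in> Gnm n m. P E}) / real (card (Gnm n m))"

definition Gexp :: "nat \<Rightarrow> nat \<Rightarrow> (nat set set \<Rightarrow> real) \<Rightarrow> real" where
  "Gexp n m f = (\<Sum>E\<in>Gnm n m. f E) / real (card (Gnm n m))"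

definition Gcond_exp :: "nat \<Rightarrow> nat \<Rightarrow> (nat set set \<Rightarrow> real) \<Rightarrow> (nat set set \<Rightarrow> bool) \<Rightarrow> real" where
  "Gcond_exp n m f P = (\<Sum>E\<in>{E \<in> Gnm n m. P E}. f E) / real (card {E \<in> Gnm n m. P E})"

end

theory Submission
  imports Defs
begin

text \<open>Write \<open>d\<^sub>1 + d\<^sub>2\<close> as the sum of the weights \<open>w e = [1 \<in> e] + [2 \<in> e]\<close> over the edges of
  the graph, and split the potential edges into the set \<open>A\<close> of the \<open>n - 1\<close> pairs containing
  vertex 3 and its complement \<open>B\<close>. Given \<open>d\<^sub>3 = k\<close>, the edge set is a uniform \<open>k\<close>-subset of \<open>A\<close>
  together with an independent uniform \<open>(m - k)\<close>-subset of \<open>B\<close>, so the conditional moment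
  generating function is the mean of \<open>exp (\<lambda> \<Sum>w)\<close> over \<open>k\<close>-subsets of \<open>A\<close> times the same mean
  over \<open>(m - k)\<close>-subsets of \<open>B\<close>. The first factor lies within \<open>exp (\<plusminus>2\<bar>\<lambda>\<bar>)\<close>, because only
  \<open>{1,3}\<close> and \<open>{2,3}\<close> carry weight. For the second, double counting shows that passing from
  \<open>j\<close>-subsets to \<open>(j+1)\<close>-subsets of \<open>B\<close> changes the mean by a factor \<open>1 \<plusminus> D / (|B| - j)\<close>, with
  \<open>D = (\<Sum>e\<in>B. \<bar>exp (\<lambda> w e) - 1\<bar>) \<le> 2 n (exp (2\<bar>\<lambda>\<bar>) - 1)\<close>. Since \<open>k\<close> takes fewer than \<open>n\<close> values
  and \<open>|B| - m \<ge> \<delta> N / 2\<close>, any two conditional moment generating functions are within a factor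
  \<open>q = exp (4\<bar>\<lambda>\<bar> + 32 (exp (2\<bar>\<lambda>\<bar>) - 1) / \<delta>)\<close> of each other. The unconditional one is an average
  of them, so every ratio lies in \<open>[1/q, q]\<close>, and \<open>q \<longrightarrow> 1\<close> as \<open>\<lambda> \<longrightarrow> 0\<close>.\<close>

section \<open>Exponential means over subsets of fixed size\<close>

definition subset_exp_mean :: "'a set \<Rightarrow> ('a \<Rightarrow> real) \<Rightarrow> nat \<Rightarrow> real" where
  "subset_exp_mean A \<phi> k = (\<Sum>S | S \<subseteq> A \<and> card S = k. exp (sum \<phi> S)) / real (card A choose k)"

lemma Suc_times_binomial_Suc: "Suc k * (n choose Suc k) = (n - k) * (n choose k)"
  by (simp only: binomial_absorption binomial_absorb_comp)

lemma sum_subsets_insert_eq: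
  assumes "finite B"
  shows "(\<Sum>F | F \<subseteq> B \<and> card F = j. \<Sum>f\<in>B - F. g (insert f F) f)
       = (\<Sum>F | F \<subseteq> B \<and> card F = Suc j. \<Sum>f\<in>F. g F f)"
proof -
  let ?T = "\<lambda>j. {F. F \<subseteq> B \<and> card F = j}"
  have fin_mem: "finite F" if "F \<subseteq> B" for F
    using assms that by (rule rev_finite_subset)
  have bij: "bij_betw (\<lambda>(F, f). (insert f F, f)) (Sigma (?T j) (\<lambda>F. B - F)) (Sigma (?T (Suc j)) (\<lambda>F. F))"
    by (rule bij_betw_byWitness[where f' = "\<lambda>(F, f). (F - {f}, f)"])
       (auto simp: fin_mem card_insert_if card_Diff_singleton_if dest: fin_mem)
  have "(\<Sum>F\<in>?T j. \<Sum>f\<in>B - F. g (insert f F) f) = (\<Sum>(F, f)\<in>Sigma (?T j) (\<lambda>F. B - F). g (insert f F) f)"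
    using assms by (subst sum.Sigma) auto
  also have "\<dots> = (\<Sum>(F, f)\<in>Sigma (?T (Suc j)) (\<lambda>F. F). g F f)"
    using sum.reindex_bij_betw[OF bij, of "\<lambda>(F, f). g F f"] by (simp add: case_prod_unfold)
  also have "\<dots> = (\<Sum>F\<in>?T (Suc j). \<Sum>f\<in>F. g F f)"
    using assms fin_mem by (subst sum.Sigma) auto
  finally show ?thesis .
qed

lemma sum_exp_subsets_Suc:
  assumes B: "finite B"
  shows "real (Suc j) * (\<Sum>F | F \<subseteq> B \<and> card F = Suc j. exp (sum \<phi> F))
           = (\<Sum>F | F \<subseteq> B \<and> card F = j. exp (sum \<phi> F) * (\<Sum>f\<in>B - F. exp (\<phi> f)))"
proof -
  have fin: "finite F" if "F \<subseteq> B" for F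
    using B that by (rule rev_finite_subset)
  have "real (Suc j) * (\<Sum>F | F \<subseteq> B \<and> card F = Suc j. exp (sum \<phi> F))
          = (\<Sum>F | F \<subseteq> B \<and> card F = Suc j. \<Sum>f\<in>F. exp (sum \<phi> F))"
    by (simp add: sum_distrib_left)
  also have "\<dots> = (\<Sum>F | F \<subseteq> B \<and> card F = j. \<Sum>f\<in>B - F. exp (sum \<phi> (insert f F)))"
    using sum_subsets_insert_eq[OF B, where j = j and g = "\<lambda>F _. exp (sum \<phi> F)"] by simp
  also have "\<dots> = (\<Sum>F | F \<subseteq> B \<and> card F = j. exp (sum \<phi> F) * (\<Sum>f\<in>B - F. exp (\<phi> f)))"
    by (intro sum.cong refl) (auto simp: sum_distrib_left exp_add fin intro!: sum.cong)
  finally show ?thesis .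
qed

lemma subset_exp_mean_pos:
  assumes "finite A" "k \<le> card A"
  shows "0 < subset_exp_mean A \<phi> k"
proof -
  obtain S where "S \<subseteq> A" "card S = k"
    using assms(2) by (meson obtain_subset_with_card_n)
  then have "0 < (\<Sum>S | S \<subseteq> A \<and> card S = k. exp (sum \<phi> S))"
    using assms(1) by (intro sum_pos2[of _ S]) auto
  then show ?thesis
    using assms by (simp add: subset_exp_mean_def)
qed

lemma subset_exp_mean_Suc:
  assumes B: "finite B" and j: "j < card B" and D: "(\<Sum>e\<in>B. \<bar>exp (\<phi> e) - 1\<bar>) \<le> D"
  shows "\<bar>subset_exp_mean B \<phi> (Suc j) - subset_exp_mean B \<phi> j\<bar>
           \<le> D / real (card B - j) * subset_exp_mean B \<phi> j"
proof -
  define W where "W F = exp (sum \<phi> F)" for F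
  define S where "S i = (\<Sum>F | F \<subseteq> B \<and> card F = i. W F)" for i
  define b where "b = real (card B - j)"
  define C where "C = real (card B choose j)"
  have b: "b > 0" and C: "C > 0"
    using j by (simp_all add: b_def C_def)
  have fin: "finite F" if "F \<subseteq> B" for F
    using B that by (rule rev_finite_subset)
  have S_Suc: "real (Suc j) * S (Suc j) = (\<Sum>F | F \<subseteq> B \<and> card F = j. W F * (\<Sum>f\<in>B - F. exp (\<phi> f)))"
    unfolding S_def W_def by (rule sum_exp_subsets_Suc[OF B])
  have deviation: "\<bar>(\<Sum>f\<in>B - F. exp (\<phi> f)) - b\<bar> \<le> D" if F: "F \<subseteq> B" "card F = j" for F
  proof -
    have "(\<Sum>f\<in>B - F. exp (\<phi> f)) - b = (\<Sum>f\<in>B - F. exp (\<phi> f) - 1)"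
      using F fin by (simp add: b_def sum_subtractf card_Diff_subset)
    also have "\<bar>\<dots>\<bar> \<le> (\<Sum>f\<in>B - F. \<bar>exp (\<phi> f) - 1\<bar>)"
      by (rule sum_abs)
    also have "\<dots> \<le> (\<Sum>e\<in>B. \<bar>exp (\<phi> e) - 1\<bar>)"
      using B by (intro sum_mono2) auto
    finally show ?thesis
      using D by linarith
  qed
  have "\<bar>real (Suc j) * S (Suc j) - b * S j\<bar>
          = \<bar>\<Sum>F | F \<subseteq> B \<and> card F = j. W F * ((\<Sum>f\<in>B - F. exp (\<phi> f)) - b)\<bar>"
    unfolding S_Suc by (simp add: S_def sum_distrib_left sum_subtractf right_diff_distrib mult.commute)
  also have "\<dots> \<le> (\<Sum>F | F \<subseteq> B \<and> card F = j. W F * D)"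
    by (rule order_trans[OF sum_abs sum_mono])
       (auto simp: abs_mult W_def intro!: mult_left_mono deviation)
  also have "\<dots> = D * S j"
    by (simp add: S_def sum_distrib_left mult.commute)
  finally have numerator: "\<bar>real (Suc j) * S (Suc j) - b * S j\<bar> \<le> D * S j" .
  have binomial: "real (Suc j) * real (card B choose Suc j) = b * C"
    unfolding b_def C_def of_nat_mult[symmetric] Suc_times_binomial_Suc ..
  have mean_Suc: "subset_exp_mean B \<phi> (Suc j) = real (Suc j) * S (Suc j) / (b * C)"
    unfolding binomial[symmetric] by (simp add: subset_exp_mean_def S_def W_def del: of_nat_Suc)
  have mean: "subset_exp_mean B \<phi> j = S j / C"
    by (simp add: subset_exp_mean_def S_def W_def C_def)
  have "subset_exp_mean B \<phi> (Suc j) - subset_exp_mean B \<phi> j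
               = (real (Suc j) * S (Suc j) - b * S j) / (b * C)"
    unfolding mean_Suc mean using b by (simp add: diff_divide_distrib del: of_nat_Suc)
  also have "\<bar>\<dots>\<bar> \<le> D * S j / (b * C)"
    using numerator b C by (simp add: abs_divide divide_right_mono)
  also have "\<dots> = D / b * subset_exp_mean B \<phi> j"
    by (simp add: subset_exp_mean_def S_def W_def C_def)
  finally show ?thesis
    by (simp add: b_def)
qed

lemma abs_ln_diff_le:
  fixes x y \<eta> :: real
  assumes x: "0 < x" and \<eta>: "0 \<le> \<eta>" "\<eta> \<le> 1/2" and y: "\<bar>y - x\<bar> \<le> \<eta> * x"
  shows "\<bar>ln y - ln x\<bar> \<le> 2 * \<eta>"
proof -
  have lower: "(1 - \<eta>) * x \<le> y" and upper: "y \<le> (1 + \<eta>) * x"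
    using y by (auto simp: abs_le_iff algebra_simps)
  have "0 < (1 - \<eta>) * x"
    using x \<eta> by simp
  then have y_pos: "0 < y"
    using lower by linarith
  have "ln y \<le> ln ((1 + \<eta>) * x)"
    using upper y_pos by simp
  then have "ln y - ln x \<le> ln (1 + \<eta>)"
    using x \<eta> by (simp add: ln_mult)
  also have "\<dots> \<le> 2 * \<eta>"
    using ln_add_one_self_le_self[OF \<eta>(1)] \<eta> by linarith
  finally have "ln y - ln x \<le> 2 * \<eta>" .
  moreover have "- (2 * \<eta>) \<le> - \<eta> - 2 * \<eta>\<^sup>2"
    using mult_right_mono[of "2 * \<eta>" 1 \<eta>] \<eta> by (simp add: power2_eq_square)
  moreover have "- \<eta> - 2 * \<eta>\<^sup>2 \<le> ln (1 - \<eta>)"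
    using ln_one_minus_pos_lower_bound \<eta> by blast
  moreover have "ln ((1 - \<eta>) * x) \<le> ln y"
    using lower \<open>0 < (1 - \<eta>) * x\<close> by simp
  then have "ln (1 - \<eta>) \<le> ln y - ln x"
    using x \<eta> by (simp add: ln_mult)
  ultimately show ?thesis
    by linarith
qed

lemma abs_diff_le_of_increments:
  fixes x :: "nat \<Rightarrow> real"
  assumes step: "\<And>j. j < m \<Longrightarrow> \<bar>x (Suc j) - x j\<bar> \<le> c" and "i \<le> m" "i' \<le> m"
  shows "\<bar>x i - x i'\<bar> \<le> c * \<bar>real i - real i'\<bar>"
proof -
  have ordered: "\<bar>x (i + d) - x i\<bar> \<le> c * real d" if "i + d \<le> m" for i d
    using that
  proof (induction d)
    case 0
    then show ?case by simp
  next
    case (Suc d)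
    have "\<bar>x (i + Suc d) - x i\<bar> \<le> \<bar>x (Suc (i + d)) - x (i + d)\<bar> + \<bar>x (i + d) - x i\<bar>"
      by simp
    also have "\<dots> \<le> c + c * real d"
      using Suc step[of "i + d"] by (intro add_mono) auto
    finally show ?case
      by (simp add: algebra_simps)
  qed
  show ?thesis
  proof (cases "i \<le> i'")
    case True
    then show ?thesis
      using ordered[of i "i' - i"] assms by (simp add: abs_minus_commute)
  next
    case False
    then show ?thesis
      using ordered[of i' "i - i'"] assms by simp
  qed
qed

lemma ln_subset_exp_mean_lipschitz:
  assumes B: "finite B" and D: "(\<Sum>e\<in>B. \<bar>exp (\<phi> e) - 1\<bar>) \<le> D"
    and room: "2 * D \<le> real (card B) - real m" and "j \<le> m" "j' \<le> m"
  shows "\<bar>ln (subset_exp_mean B \<phi> j) - ln (subset_exp_mean B \<phi> j')\<bar>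
           \<le> 2 * D / (real (card B) - real m) * \<bar>real j - real j'\<bar>"
proof (rule abs_diff_le_of_increments[where m = m])
  fix i assume i: "i < m"
  have "0 \<le> D"
    using order_trans[OF sum_nonneg D] by simp
  then have m: "m \<le> card B"
    using room by linarith
  define \<eta> where "\<eta> = D / real (card B - i)"
  have "2 * \<eta> \<le> 2 * D / (real (card B) - real m)"
  proof (cases "D = 0")
    case False
    then have "0 < real (card B) - real m"
      using room \<open>0 \<le> D\<close> by linarith
    then show ?thesis
      using i m \<open>0 \<le> D\<close> by (auto simp: \<eta>_def of_nat_diff intro!: frac_le)
  qed (simp add: \<eta>_def)
  moreover have "\<bar>ln (subset_exp_mean B \<phi> (Suc i)) - ln (subset_exp_mean B \<phi> i)\<bar> \<le> 2 * \<eta>"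
  proof (rule abs_ln_diff_le)
    show "0 < subset_exp_mean B \<phi> i"
      using B i m by (intro subset_exp_mean_pos) auto
    show "0 \<le> \<eta>" "\<eta> \<le> 1/2"
      using \<open>0 \<le> D\<close> room i m by (auto simp: \<eta>_def of_nat_diff field_simps)
    show "\<bar>subset_exp_mean B \<phi> (Suc i) - subset_exp_mean B \<phi> i\<bar> \<le> \<eta> * subset_exp_mean B \<phi> i"
      unfolding \<eta>_def using B D i m by (intro subset_exp_mean_Suc) auto
  qed
  ultimately show "\<bar>ln (subset_exp_mean B \<phi> (Suc i)) - ln (subset_exp_mean B \<phi> i)\<bar>
                     \<le> 2 * D / (real (card B) - real m)"
    by linarith
qed (use assms in auto)

lemma abs_ln_subset_exp_mean_le:
  assumes "finite A" "k \<le> card A" and bound: "\<And>S. S \<subseteq> A \<Longrightarrow> card S = k \<Longrightarrow> \<bar>sum \<phi> S\<bar> \<le> c"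
  shows "\<bar>ln (subset_exp_mean A \<phi> k)\<bar> \<le> c"
proof -
  let ?T = "{S. S \<subseteq> A \<and> card S = k}"
  have card_T: "real (card ?T) = real (card A choose k)"
    using assms(1) by (simp add: n_subsets)
  have "(\<Sum>S\<in>?T. exp (sum \<phi> S)) \<le> real (card ?T) * exp c"
    using bound by (intro sum_bounded_above) (simp add: abs_le_iff)
  moreover have "real (card ?T) * exp (- c) \<le> (\<Sum>S\<in>?T. exp (sum \<phi> S))"
  proof (rule sum_bounded_below)
    fix S assume "S \<in> ?T"
    then show "exp (- c) \<le> exp (sum \<phi> S)"
      using bound[of S] by simp
  qed
  moreover have "0 < real (card A choose k)"
    using assms(2) by simp
  ultimately have upper: "subset_exp_mean A \<phi> k \<le> exp c" and lower: "exp (- c) \<le> subset_exp_mean A \<phi> k"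
    unfolding subset_exp_mean_def card_T by (simp_all add: divide_le_eq le_divide_eq mult.commute)
  have pos: "0 < subset_exp_mean A \<phi> k"
    using assms(1,2) by (rule subset_exp_mean_pos)
  have "ln (subset_exp_mean A \<phi> k) \<le> ln (exp c)"
    using upper pos by (subst ln_le_cancel_iff) auto
  moreover have "- c \<le> ln (subset_exp_mean A \<phi> k)"
    using lower pos by (simp add: ln_ge_iff)
  ultimately show ?thesis
    by (simp add: abs_le_iff)
qed

lemma mean_exp_split_subsets:
  fixes k j :: nat
  assumes A: "finite A" and B: "finite B" and disjoint: "A \<inter> B = {}"
  defines "X \<equiv> {E. E \<subseteq> A \<union> B \<and> card (E \<inter> A) = k \<and> card (E \<inter> B) = j}"
  shows "(\<Sum>E\<in>X. exp (sum \<phi> E)) / real (card X) = subset_exp_mean A \<phi> k * subset_exp_mean B \<phi> j"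
proof -
  let ?P = "{S. S \<subseteq> A \<and> card S = k} \<times> {F. F \<subseteq> B \<and> card F = j}"
  let ?union = "\<lambda>(S, F). S \<union> F"
  have split_back: "(S \<union> F) \<inter> A = S" "(S \<union> F) \<inter> B = F" if "S \<subseteq> A" "F \<subseteq> B" for S F
    using that disjoint by auto
  have X: "X = ?union ` ?P"
  proof (rule set_eqI iffI)+
    fix E assume "E \<in> X"
    then have "E = ?union (E \<inter> A, E \<inter> B)" "(E \<inter> A, E \<inter> B) \<in> ?P"
      by (auto simp: X_def)
    then show "E \<in> ?union ` ?P"
      by blast
  next
    fix E assume "E \<in> ?union ` ?P"
    then obtain S F where "E = S \<union> F" "S \<subseteq> A" "card S = k" "F \<subseteq> B" "card F = j"
      by auto
    moreover note split_back[of S F]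
    ultimately show "E \<in> X"
      by (auto simp: X_def)
  qed
  have inj: "inj_on ?union ?P"
  proof (rule inj_onI, clarify)
    fix S F S' F'
    assume "S \<subseteq> A" "F \<subseteq> B" "S' \<subseteq> A" "F' \<subseteq> B" and "S \<union> F = S' \<union> F'"
    then show "S = S' \<and> F = F'"
      using split_back by metis
  qed
  have "(\<Sum>E\<in>X. exp (sum \<phi> E)) = (\<Sum>(S, F)\<in>?P. exp (sum \<phi> (S \<union> F)))"
    unfolding X by (subst sum.reindex[OF inj]) (simp add: case_prod_unfold)
  also have "\<dots> = (\<Sum>(S, F)\<in>?P. exp (sum \<phi> S) * exp (sum \<phi> F))"
  proof (intro sum.cong refl, clarify)
    fix S F assume "S \<subseteq> A" "F \<subseteq> B"
    then have "sum \<phi> (S \<union> F) = sum \<phi> S + sum \<phi> F"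
      using A B disjoint by (intro sum.union_disjoint) (auto intro: finite_subset)
    then show "exp (sum \<phi> (S \<union> F)) = exp (sum \<phi> S) * exp (sum \<phi> F)"
      by (simp add: exp_add)
  qed
  also have "\<dots> = (\<Sum>S | S \<subseteq> A \<and> card S = k. exp (sum \<phi> S)) * (\<Sum>F | F \<subseteq> B \<and> card F = j. exp (sum \<phi> F))"
    by (simp add: sum_product sum.cartesian_product)
  finally have sum_X: "(\<Sum>E\<in>X. exp (sum \<phi> E)) = \<dots>" .
  have "card X = (card A choose k) * (card B choose j)"
    unfolding X card_image[OF inj] card_cartesian_product using A B by (simp add: n_subsets)
  then show ?thesis
    unfolding sum_X subset_exp_mean_def by (simp add: times_divide_times_eq)
qed

section \<open>Averages over the fibres of a map\<close>

lemma mean_between_fibre_means: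
  fixes f :: "'a \<Rightarrow> real" and h :: "'a \<Rightarrow> 'b" and S :: "'a set"
  assumes S: "finite S" "S \<noteq> {}"
    and M: "\<And>y. y \<in> h ` S \<Longrightarrow> M y = sum f {x \<in> S. h x = y} / real (card {x \<in> S. h x = y})"
    and bounds: "\<And>y. y \<in> h ` S \<Longrightarrow> a \<le> M y \<and> M y \<le> b"
  shows "a \<le> sum f S / real (card S) \<and> sum f S / real (card S) \<le> b"
proof -
  let ?F = "\<lambda>y. {x \<in> S. h x = y}"
  have fibre_sum: "sum f (?F y) = real (card (?F y)) * M y" if "y \<in> h ` S" for y
  proof -
    have "0 < card (?F y)"
      using S that by (auto simp: card_gt_0_iff)
    then show ?thesis
      by (simp add: M[OF that])
  qed
  have sum_S: "sum f S = (\<Sum>y\<in>h ` S. real (card (?F y)) * M y)"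
    using sum.image_gen[OF S(1), of f h] fibre_sum by simp
  have card_S: "real (card S) = (\<Sum>y\<in>h ` S. real (card (?F y)))"
    using sum.image_gen[OF S(1), of "\<lambda>_. 1 :: real" h] by simp
  have "a * real (card S) \<le> sum f S"
    unfolding sum_S card_S sum_distrib_left
    using bounds by (intro sum_mono) (metis mult.commute mult_left_mono of_nat_0_le_iff)
  moreover have "sum f S \<le> b * real (card S)"
    unfolding sum_S card_S sum_distrib_left
    using bounds by (intro sum_mono) (metis mult.commute mult_left_mono of_nat_0_le_iff)
  moreover have "0 < real (card S)"
    using S by (simp add: card_gt_0_iff)
  ultimately show ?thesis
    by (simp add: divide_le_eq le_divide_eq)
qed

lemma abs_fibre_mean_div_mean_le:
  fixes f :: "'a \<Rightarrow> real" and h :: "'a \<Rightarrow> 'b" and S :: "'a set"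
  assumes S: "finite S" and y: "y \<in> h ` S"
    and M: "\<And>y. M y = sum f {x \<in> S. h x = y} / real (card {x \<in> S. h x = y})"
    and M_pos: "0 < M y"
    and close: "\<And>y'. y' \<in> h ` S \<Longrightarrow> M y' \<le> q * M y \<and> M y \<le> q * M y'"
  shows "\<bar>M y / (sum f S / real (card S)) - 1\<bar> \<le> q - 1"
proof -
  define g where "g = sum f S / real (card S)"
  have "M y \<le> q * M y"
    using close[OF y] by simp
  then have q: "1 \<le> q"
    using M_pos by simp
  have bounds: "M y / q \<le> g \<and> g \<le> q * M y"
    unfolding g_def
  proof (rule mean_between_fibre_means[OF S])
    show "S \<noteq> {}"
      using y by blast
    show "M y' = sum f {x \<in> S. h x = y'} / real (card {x \<in> S. h x = y'})" for y'
      by (rule M)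
    show "M y / q \<le> M y' \<and> M y' \<le> q * M y" if "y' \<in> h ` S" for y'
      using close[OF that] q by (simp add: divide_le_eq mult.commute)
  qed
  moreover have "0 < M y / q"
    using M_pos q by simp
  ultimately have g_pos: "0 < g"
    by linarith
  have "M y \<le> q * g"
    using bounds q by (simp add: divide_le_eq mult.commute)
  then have "M y / g \<le> q"
    using g_pos by (simp add: divide_le_eq mult.commute)
  moreover have "1 / q \<le> M y / g"
    using bounds g_pos q by (simp add: divide_le_eq le_divide_eq mult.commute)
  moreover have "1 - 1 / q \<le> q - 1"
  proof -
    have "0 \<le> (q - 1) * (q - 1)"
      by simp
    then have "q * 2 \<le> 1 + q * q"
      by (simp add: algebra_simps)
    then show ?thesis
      using q by (simp add: field_simps)
  qed
  ultimately show ?thesis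
    unfolding g_def[symmetric] by linarith
qed

section \<open>Degrees in \<open>G(n,m)\<close>\<close>

definition incident_edges :: "nat \<Rightarrow> nat \<Rightarrow> nat set set" where
  "incident_edges n a = {e \<in> all_edges n. a \<in> e}"

lemma finite_all_edges: "finite (all_edges n)"
  unfolding all_edges_def by (rule finite_subset[of _ "Pow {1..n}"]) auto

lemma card_all_edges: "card (all_edges n) = n choose 2"
  unfolding all_edges_def using n_subsets[of "{1..n}" 2] by simp

lemma real_choose_two: "real (n choose 2) = real n * (real n - 1) / 2"
proof -
  have "2 * (n choose 2) = n * (n - 1)"
    using binomial_absorption[of 1 n] by (simp add: numeral_2_eq_2)
  then have "2 * real (n choose 2) = real n * real (n - 1)"
    by (metis of_nat_mult of_nat_numeral)
  then show ?thesis
    by (cases n) auto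
qed

lemma finite_Gnm: "finite (Gnm n m)"
  unfolding Gnm_def by (rule finite_subset[of _ "Pow (all_edges n)"]) (auto simp: finite_all_edges)

lemma Gnm_nonempty:
  assumes "m \<le> n choose 2"
  shows "Gnm n m \<noteq> {}"
proof -
  obtain E where "E \<subseteq> all_edges n" "card E = m"
    using assms by (metis card_all_edges obtain_subset_with_card_n)
  then show ?thesis
    by (auto simp: Gnm_def)
qed

lemma Gprob_pos_iff: "0 < Gprob n m P \<longleftrightarrow> {E \<in> Gnm n m. P E} \<noteq> {}"
  using finite_Gnm[of n m] by (auto simp: Gprob_def card_gt_0_iff zero_less_divide_iff)

lemma card_incident_edges_le: "card (incident_edges n a) \<le> n - 1"
proof (cases "a \<in> {1..n}")
  case True
  have "incident_edges n a \<subseteq> (\<lambda>x. {a, x}) ` ({1..n} - {a})"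
    by (auto simp: incident_edges_def all_edges_def card_2_iff)
  then have "card (incident_edges n a) \<le> card ((\<lambda>x. {a, x}) ` ({1..n} - {a}))"
    by (intro card_mono) auto
  also have "\<dots> \<le> card ({1..n} - {a})"
    by (rule card_image_le) simp
  finally show ?thesis
    using True by simp
next
  case False
  then have "incident_edges n a = {}"
    by (auto simp: incident_edges_def all_edges_def)
  then show ?thesis
    by simp
qed

lemma card_non_incident_edges_minus_ge:
  fixes \<delta> :: real
  assumes "real m \<le> (1 - \<delta>) * real (n choose 2)" and "5 * real n \<le> \<delta> * real (n choose 2)"
  shows "4 * real n \<le> real (card (all_edges n - incident_edges n a)) - real m"
    and "\<delta> * real (n choose 2) / 2 \<le> real (card (all_edges n - incident_edges n a)) - real m"
proof -
  have "card (all_edges n - incident_edges n a) = (n choose 2) - card (incident_edges n a)"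
    using finite_all_edges by (subst card_Diff_subset) (auto simp: incident_edges_def card_all_edges)
  then have "real (n choose 2) - real n \<le> real (card (all_edges n - incident_edges n a))"
    using card_incident_edges_le[of n a] by linarith
  then show "4 * real n \<le> real (card (all_edges n - incident_edges n a)) - real m"
    and "\<delta> * real (n choose 2) / 2 \<le> real (card (all_edges n - incident_edges n a)) - real m"
    using assms by (simp_all add: algebra_simps)
qed

lemma deg_eq_card_inter_incident: "E \<subseteq> all_edges n \<Longrightarrow> deg E a = card (E \<inter> incident_edges n a)"
  unfolding deg_def incident_edges_def by (rule arg_cong[where f = card]) auto

lemma deg_le_one_if_incident:
  assumes "S \<subseteq> incident_edges n a" "i \<noteq> a"
  shows "deg S i \<le> 1"
proof -
  have "{e \<in> S. i \<in> e} \<subseteq> {{a, i}}"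
    using assms by (auto simp: incident_edges_def all_edges_def card_2_iff)
  from card_mono[OF _ this] show ?thesis
    by (simp add: deg_def)
qed

lemma real_deg_eq_sum: "finite E \<Longrightarrow> real (deg E i) = (\<Sum>e\<in>E. of_bool (i \<in> e))"
  unfolding deg_def by (simp add: sum.inter_filter[symmetric] of_bool_def)

lemma deg_image_Gnm_le:
  assumes "j \<in> (\<lambda>E. deg E a) ` Gnm n m"
  shows "j \<le> m" and "j \<le> card (incident_edges n a)"
proof -
  from assms obtain E where E: "E \<subseteq> all_edges n" "card E = m" and j: "j = card (E \<inter> incident_edges n a)"
    by (auto simp: Gnm_def deg_eq_card_inter_incident)
  have "finite E" "finite (incident_edges n a)"
    using E(1) finite_all_edges by (auto simp: incident_edges_def intro: finite_subset)
  then show "j \<le> m" and "j \<le> card (incident_edges n a)"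
    using E j by (auto intro: card_mono)
qed

lemma Gprob_deg_pos_exists:
  assumes "1 \<le> n" "m \<le> n choose 2"
  shows "\<exists>k<n. 0 < Gprob n m (\<lambda>E. deg E a = k)"
proof -
  obtain E where E: "E \<in> Gnm n m"
    using Gnm_nonempty[OF assms(2)] by blast
  then have "deg E a \<le> card (incident_edges n a)"
    by (intro deg_image_Gnm_le) auto
  then have "deg E a < n"
    using card_incident_edges_le[of n a] assms(1) by linarith
  moreover have "0 < Gprob n m (\<lambda>F. deg F a = deg E a)"
    using E by (auto simp: Gprob_pos_iff)
  ultimately show ?thesis
    by blast
qed

lemma Gcond_exp_deg_eq_mean_product:
  assumes f: "\<And>E. E \<subseteq> all_edges n \<Longrightarrow> f E = c * exp (sum \<phi> E)" and "k \<le> m"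
  shows "Gcond_exp n m f (\<lambda>E. deg E a = k)
           = c * subset_exp_mean (incident_edges n a) \<phi> k
               * subset_exp_mean (all_edges n - incident_edges n a) \<phi> (m - k)"
proof -
  let ?A = "incident_edges n a" and ?B = "all_edges n - incident_edges n a"
  let ?X = "{E. E \<subseteq> ?A \<union> ?B \<and> card (E \<inter> ?A) = k \<and> card (E \<inter> ?B) = m - k}"
  have A: "finite ?A" and B: "finite ?B" and AB: "?A \<union> ?B = all_edges n"
    using finite_all_edges by (auto simp: incident_edges_def)
  have card_split: "card E = card (E \<inter> ?A) + card (E \<inter> ?B)" if "E \<subseteq> all_edges n" for E
  proof -
    have "finite E"
      using that finite_all_edges by (rule finite_subset)
    then have "card ((E \<inter> ?A) \<union> (E \<inter> ?B)) = card (E \<inter> ?A) + card (E \<inter> ?B)"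
      by (intro card_Un_disjoint) auto
    moreover have "(E \<inter> ?A) \<union> (E \<inter> ?B) = E"
      using that AB by blast
    ultimately show ?thesis
      by simp
  qed
  have fibre: "{E \<in> Gnm n m. deg E a = k} = ?X"
    using \<open>k \<le> m\<close> card_split AB by (auto simp: Gnm_def deg_eq_card_inter_incident)
  have "Gcond_exp n m f (\<lambda>E. deg E a = k) = (\<Sum>E\<in>?X. c * exp (sum \<phi> E)) / real (card ?X)"
    unfolding Gcond_exp_def fibre using AB by (intro arg_cong2[where f = "(/)"] sum.cong) (auto simp: f)
  also have "\<dots> = c * ((\<Sum>E\<in>?X. exp (sum \<phi> E)) / real (card ?X))"
    by (simp add: sum_distrib_left)
  also have "\<dots> = c * (subset_exp_mean ?A \<phi> k * subset_exp_mean ?B \<phi> (m - k))"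
    using mean_exp_split_subsets[OF A B] by auto
  finally show ?thesis
    by (simp add: mult.assoc)
qed

section \<open>The moment generating function of \<open>d\<^sub>1 + d\<^sub>2\<close>\<close>

lemma abs_exp_minus_one_le: "\<bar>exp x - 1\<bar> \<le> exp \<bar>x\<bar> - (1 :: real)"
proof (cases "0 \<le> x")
  case False
  have "1 - exp x \<le> - x"
    using exp_ge_add_one_self[of x] by linarith
  also have "\<dots> \<le> exp (- x) - 1"
    using exp_ge_add_one_self[of "- x"] by linarith
  finally show ?thesis
    using False by simp
qed simp

definition pair_deg_weight :: "real \<Rightarrow> nat set \<Rightarrow> real" where
  "pair_deg_weight l e = l * (of_bool (1 \<in> e) + of_bool (2 \<in> e))"

lemma sum_pair_deg_weight:
  "finite E \<Longrightarrow> sum (pair_deg_weight l) E = l * (real (deg E 1) + real (deg E 2))"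
  by (simp add: pair_deg_weight_def real_deg_eq_sum sum.distrib sum_distrib_left distrib_left)

lemma abs_sum_pair_deg_weight_incident:
  assumes "S \<subseteq> incident_edges n 3"
  shows "\<bar>sum (pair_deg_weight l) S\<bar> \<le> 2 * \<bar>l\<bar>"
proof -
  have "finite S"
    using assms finite_all_edges by (auto simp: incident_edges_def intro: finite_subset)
  moreover have "real (deg S 1) + real (deg S 2) \<le> 2"
    using deg_le_one_if_incident[OF assms, of 1] deg_le_one_if_incident[OF assms, of 2] by simp
  then have "\<bar>l\<bar> * (real (deg S 1) + real (deg S 2)) \<le> \<bar>l\<bar> * 2"
    by (intro mult_left_mono) auto
  ultimately show ?thesis
    by (simp add: sum_pair_deg_weight abs_mult mult.commute)
qed

lemma sum_abs_exp_pair_deg_weight_le: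
  "(\<Sum>e\<in>all_edges n. \<bar>exp (pair_deg_weight l e) - 1\<bar>) \<le> 2 * real n * (exp (2 * \<bar>l\<bar>) - 1)"
proof -
  let ?c = "exp (2 * \<bar>l\<bar>) - 1"
  have term_le: "\<bar>exp (pair_deg_weight l e) - 1\<bar> \<le> of_bool (1 \<in> e \<or> 2 \<in> e) * ?c" for e
  proof (cases "1 \<in> e \<or> 2 \<in> e")
    case True
    have "\<bar>pair_deg_weight l e\<bar> \<le> 2 * \<bar>l\<bar>"
      by (simp add: pair_deg_weight_def abs_mult)
    then have "exp \<bar>pair_deg_weight l e\<bar> - 1 \<le> ?c"
      by simp
    with True show ?thesis
      using order_trans[OF abs_exp_minus_one_le] by simp
  qed (simp add: pair_deg_weight_def)
  have touching: "all_edges n \<inter> {e. 1 \<in> e \<or> 2 \<in> e} = incident_edges n 1 \<union> incident_edges n 2"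
    by (auto simp: incident_edges_def)
  have "(\<Sum>e\<in>all_edges n. \<bar>exp (pair_deg_weight l e) - 1\<bar>)
          \<le> (\<Sum>e\<in>all_edges n. of_bool (1 \<in> e \<or> 2 \<in> e) * ?c)"
    by (intro sum_mono term_le)
  also have "\<dots> = real (card (incident_edges n 1 \<union> incident_edges n 2)) * ?c"
    unfolding touching[symmetric] by (subst sum_of_bool_mult_eq) (simp_all add: finite_all_edges)
  also have "\<dots> \<le> 2 * real n * ?c"
  proof (rule mult_right_mono)
    have "card (incident_edges n 1 \<union> incident_edges n 2) \<le> (n - 1) + (n - 1)"
      by (meson add_mono card_Un_le card_incident_edges_le le_trans)
    then show "real (card (incident_edges n 1 \<union> incident_edges n 2)) \<le> 2 * real n"
      by linarith
  qed simp
  finally show ?thesis .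
qed

lemma ln_mean_non_incident_diff_le:
  fixes l \<delta> :: real and n a :: nat
  defines "B \<equiv> all_edges n - incident_edges n a"
  assumes n: "2 \<le> n" and \<delta>: "0 < \<delta>" and m: "real m \<le> (1 - \<delta>) * real (n choose 2)"
    and n_large: "5 * real n \<le> \<delta> * real (n choose 2)" and l_small: "exp (2 * \<bar>l\<bar>) - 1 \<le> 1"
    and j: "j \<le> m" "j' \<le> m" "\<bar>real j - real j'\<bar> \<le> real n"
  shows "\<bar>ln (subset_exp_mean B (pair_deg_weight l) j) - ln (subset_exp_mean B (pair_deg_weight l) j')\<bar>
           \<le> 32 * (exp (2 * \<bar>l\<bar>) - 1) / \<delta>"
proof -
  define c where "c = exp (2 * \<bar>l\<bar>) - 1"
  define D where "D = 2 * real n * c"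
  define N where "N = real (n choose 2)"
  have c: "0 \<le> c" "c \<le> 1"
    using l_small by (simp_all add: c_def)
  have N_pos: "0 < N"
    using n by (simp add: N_def)
  have n_sq: "real n * real n \<le> 4 * N"
    using n by (simp add: N_def real_choose_two algebra_simps)
  have room: "4 * real n \<le> real (card B) - real m" "\<delta> * N / 2 \<le> real (card B) - real m"
    using card_non_incident_edges_minus_ge[OF m n_large] by (simp_all add: B_def N_def)
  have "(\<Sum>e\<in>B. \<bar>exp (pair_deg_weight l e) - 1\<bar>) \<le> (\<Sum>e\<in>all_edges n. \<bar>exp (pair_deg_weight l e) - 1\<bar>)"
    unfolding B_def using finite_all_edges by (intro sum_mono2) auto
  also have "\<dots> \<le> D"
    unfolding D_def c_def by (rule sum_abs_exp_pair_deg_weight_le)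
  finally have D_sum: "(\<Sum>e\<in>B. \<bar>exp (pair_deg_weight l e) - 1\<bar>) \<le> D" .
  have D: "0 \<le> D" "2 * D \<le> real (card B) - real m"
    using c room mult_left_le[of c "real n"] by (simp_all add: D_def)
  have "\<bar>ln (subset_exp_mean B (pair_deg_weight l) j) - ln (subset_exp_mean B (pair_deg_weight l) j')\<bar>
          \<le> 2 * D / (real (card B) - real m) * \<bar>real j - real j'\<bar>"
    using finite_all_edges D_sum D(2) j(1,2) by (intro ln_subset_exp_mean_lipschitz) (auto simp: B_def)
  also have "\<dots> \<le> 2 * D / (\<delta> * N / 2) * real n"
    using room \<delta> N_pos D j(3) by (intro mult_mono frac_le) auto
  also have "\<dots> = 8 * c * (real n * real n) / (\<delta> * N)"
    by (simp add: D_def field_simps)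
  also have "\<dots> \<le> 8 * c * (4 * N) / (\<delta> * N)"
    using n_sq c \<delta> N_pos by (intro divide_right_mono mult_left_mono) auto
  also have "\<dots> = 32 * c / \<delta>"
    using N_pos by (simp add: field_simps)
  finally show ?thesis
    by (simp add: c_def)
qed

lemma Gcond_exp_deg3_le_exp_mult:
  fixes l t \<delta> :: real
  defines "f \<equiv> \<lambda>E. exp (l * (real (deg E 1) + real (deg E 2) - t))"
  assumes n: "3 \<le> n" and \<delta>: "0 < \<delta>" and m: "real m \<le> (1 - \<delta>) * real (n choose 2)"
    and n_large: "5 * real n \<le> \<delta> * real (n choose 2)" and l_small: "exp (2 * \<bar>l\<bar>) - 1 \<le> 1"
    and k: "k \<in> (\<lambda>E. deg E 3) ` Gnm n m" and k': "k' \<in> (\<lambda>E. deg E 3) ` Gnm n m"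
  shows "Gcond_exp n m f (\<lambda>E. deg E 3 = k)
           \<le> exp (4 * \<bar>l\<bar> + 32 * (exp (2 * \<bar>l\<bar>) - 1) / \<delta>) * Gcond_exp n m f (\<lambda>E. deg E 3 = k')"
proof -
  define A where "A = incident_edges n 3"
  define B where "B = all_edges n - A"
  define \<phi> where "\<phi> = pair_deg_weight l"
  define C where "C = 4 * \<bar>l\<bar> + 32 * (exp (2 * \<bar>l\<bar>) - 1) / \<delta>"
  define R where "R j = Gcond_exp n m f (\<lambda>E. deg E 3 = j)" for j
  have fin_A: "finite A" and fin_B: "finite B"
    using finite_all_edges by (simp_all add: A_def B_def incident_edges_def)
  have bounded: "j \<le> m \<and> j \<le> card A \<and> j < n" if "j \<in> (\<lambda>E. deg E 3) ` Gnm n m" for j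
    using deg_image_Gnm_le[OF that] card_incident_edges_le[of n 3] n by (auto simp: A_def)
  have "m \<le> card B"
    using card_non_incident_edges_minus_ge(1)[OF m n_large, of 3] by (simp add: B_def A_def)
  then have mean_pos: "0 < subset_exp_mean A \<phi> j" "0 < subset_exp_mean B \<phi> (m - j)"
    if "j \<in> (\<lambda>E. deg E 3) ` Gnm n m" for j
    using bounded[OF that] fin_A fin_B by (auto intro: subset_exp_mean_pos)
  have "f E = exp (- (l * t)) * exp (sum \<phi> E)" if "E \<subseteq> all_edges n" for E
    using finite_subset[OF that finite_all_edges]
    by (simp add: f_def \<phi>_def sum_pair_deg_weight exp_add[symmetric] algebra_simps)
  then have "R j = exp (- (l * t)) * subset_exp_mean A \<phi> j * subset_exp_mean B \<phi> (m - j)" if "j \<le> m" for j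
    unfolding R_def A_def B_def using that by (rule Gcond_exp_deg_eq_mean_product)
  then have ln_R: "ln (R j) = - (l * t) + ln (subset_exp_mean A \<phi> j) + ln (subset_exp_mean B \<phi> (m - j))"
    and R_pos: "0 < R j"
    if "j \<in> (\<lambda>E. deg E 3) ` Gnm n m" for j
    using bounded[OF that] mean_pos[OF that] by (simp_all add: ln_mult)
  have A_part: "\<bar>ln (subset_exp_mean A \<phi> j)\<bar> \<le> 2 * \<bar>l\<bar>" if "j \<le> card A" for j
    using fin_A that abs_sum_pair_deg_weight_incident
    by (intro abs_ln_subset_exp_mean_le) (auto simp: A_def \<phi>_def)
  have "\<bar>real (m - k) - real (m - k')\<bar> \<le> real n"
    using bounded[OF k] bounded[OF k'] by (simp add: of_nat_diff abs_le_iff)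
  then have B_part: "\<bar>ln (subset_exp_mean B \<phi> (m - k)) - ln (subset_exp_mean B \<phi> (m - k'))\<bar>
                       \<le> 32 * (exp (2 * \<bar>l\<bar>) - 1) / \<delta>"
    unfolding B_def A_def \<phi>_def using n \<delta> m n_large l_small by (intro ln_mean_non_incident_diff_le) auto
  have "ln (R k) \<le> ln (R k') + C"
    using ln_R[OF k] ln_R[OF k'] abs_le_D1[OF B_part] bounded[OF k] bounded[OF k']
      abs_le_D1[OF A_part[of k]] abs_le_D2[OF A_part[of k']]
    unfolding C_def by linarith
  then have "exp (ln (R k)) \<le> exp (ln (R k') + C)"
    by simp
  then show ?thesis
    using R_pos[OF k] R_pos[OF k'] by (simp add: R_def C_def exp_add mult.commute)
qed

lemma Gcond_exp_deg3_ratio_bound: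
  fixes l t \<delta> :: real
  defines "f \<equiv> \<lambda>E. exp (l * (real (deg E 1) + real (deg E 2) - t))"
  assumes "3 \<le> n" "0 < \<delta>" "real m \<le> (1 - \<delta>) * real (n choose 2)"
    and "5 * real n \<le> \<delta> * real (n choose 2)" "exp (2 * \<bar>l\<bar>) - 1 \<le> 1"
    and k: "0 < Gprob n m (\<lambda>E. deg E 3 = k)"
  shows "\<bar>Gcond_exp n m f (\<lambda>E. deg E 3 = k) / Gexp n m f - 1\<bar>
           \<le> exp (4 * \<bar>l\<bar> + 32 * (exp (2 * \<bar>l\<bar>) - 1) / \<delta>) - 1" (is "_ \<le> ?q - 1")
proof -
  have fibre: "{E \<in> Gnm n m. deg E 3 = k} \<noteq> {}"
    using Gprob_pos_iff[THEN iffD1, OF k] .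
  then have k_in: "k \<in> (\<lambda>E. deg E 3) ` Gnm n m"
    by auto
  have pos: "0 < Gcond_exp n m f (\<lambda>E. deg E 3 = k)"
    using fibre finite_Gnm unfolding Gcond_exp_def f_def
    by (intro divide_pos_pos sum_pos) (auto simp: card_gt_0_iff)
  have close: "Gcond_exp n m f (\<lambda>E. deg E 3 = k') \<le> ?q * Gcond_exp n m f (\<lambda>E. deg E 3 = k)
                 \<and> Gcond_exp n m f (\<lambda>E. deg E 3 = k) \<le> ?q * Gcond_exp n m f (\<lambda>E. deg E 3 = k')"
    if "k' \<in> (\<lambda>E. deg E 3) ` Gnm n m" for k'
    unfolding f_def
    by (rule conjI[OF Gcond_exp_deg3_le_exp_mult[OF assms(2-6) that k_in]
                      Gcond_exp_deg3_le_exp_mult[OF assms(2-6) k_in that]])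
  show ?thesis
    unfolding Gexp_def
    using abs_fibre_mean_div_mean_le[where M = "\<lambda>j. Gcond_exp n m f (\<lambda>E. deg E 3 = j)",
                                     OF finite_Gnm k_in _ pos close]
    by (simp add: Gcond_exp_def)
qed

lemma SUP_tendsto_zero:
  fixes g :: "nat \<Rightarrow> 'a \<Rightarrow> real"
  assumes bounds: "eventually (\<lambda>n. K n \<noteq> {} \<and> (\<forall>k\<in>K n. 0 \<le> g n k \<and> g n k \<le> b n)) sequentially"
    and "b \<longlonglongrightarrow> 0"
  shows "(\<lambda>n. SUP k\<in>K n. g n k) \<longlonglongrightarrow> 0"
proof (rule tendsto_sandwich[OF _ _ tendsto_const \<open>b \<longlonglongrightarrow> 0\<close>])
  show "eventually (\<lambda>n. 0 \<le> (SUP k\<in>K n. g n k)) sequentially"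
    using bounds
  proof eventually_elim
    case (elim n)
    then obtain k where "k \<in> K n"
      by blast
    moreover have "bdd_above (g n ` K n)"
      using elim by (intro bdd_aboveI2[where M = "b n"]) blast
    ultimately show ?case
      using elim by (meson cSUP_upper order_trans)
  qed
  show "eventually (\<lambda>n. (SUP k\<in>K n. g n k) \<le> b n) sequentially"
    using bounds by eventually_elim (simp add: cSUP_least)
qed

lemma eventually_choose_two_large:
  fixes \<delta> :: real
  assumes "0 < \<delta>"
  shows "eventually (\<lambda>n. 3 \<le> n \<and> 5 * real n \<le> \<delta> * real (n choose 2)) sequentially"
proof -
  have "eventually (\<lambda>n. 3 + 10 / \<delta> \<le> real n) sequentially"
    using filterlim_real_sequentially by (simp add: filterlim_at_top)
  then show ?thesis
  proof eventually_elim
    case (elim n)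
    have "0 < 10 / \<delta>"
      using assms by simp
    then have "3 \<le> real n" "10 / \<delta> \<le> real n - 1"
      using elim by linarith+
    then have "10 \<le> \<delta> * (real n - 1)"
      using assms by (simp add: divide_le_eq mult.commute)
    then have "real n * 10 \<le> real n * (\<delta> * (real n - 1))"
      by (intro mult_left_mono) auto
    then show ?case
      using \<open>3 \<le> real n\<close> by (simp add: real_choose_two algebra_simps)
  qed
qed

theorem mainTheorem18:
  fixes \<delta> :: real and m :: "nat \<Rightarrow> nat" and lam :: "nat \<Rightarrow> real"
  assumes "0 < \<delta>" and "\<delta> < 1"
    and "eventually (\<lambda>n. 1 \<le> m n \<and> real (m n) \<le> (1 - \<delta>) * real (n choose 2)) at_top"
    and "lam \<longlonglongrightarrow> 0"
  shows "(\<lambda>n. SUP k \<in> {k. k < n \<and> Gprob n (m n) (\<lambda>E. deg E 3 = k) > 0}.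
            \<bar>Gcond_exp n (m n)
                (\<lambda>E. exp (lam n * (real (deg E 1) + real (deg E 2) - 2 * (2 * real (m n) / real n))))
                (\<lambda>E. deg E 3 = k)
             / Gexp n (m n)
                (\<lambda>E. exp (lam n * (real (deg E 1) + real (deg E 2) - 2 * (2 * real (m n) / real n))))
             - 1\<bar>) \<longlonglongrightarrow> 0"
proof -
  define b where "b n = exp (4 * \<bar>lam n\<bar> + 32 * (exp (2 * \<bar>lam n\<bar>) - 1) / \<delta>) - 1" for n
  have lam: "(\<lambda>n. \<bar>lam n\<bar>) \<longlonglongrightarrow> 0"
    using assms(4) by (rule tendsto_rabs_zero)
  then have "b \<longlonglongrightarrow> exp (4 * 0 + 32 * (exp (2 * 0) - 1) / \<delta>) - 1"
    unfolding b_def using assms(1) by (intro tendsto_intros) auto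
  then have b: "b \<longlonglongrightarrow> 0"
    by simp
  have "(\<lambda>n. exp (2 * \<bar>lam n\<bar>)) \<longlonglongrightarrow> exp (2 * 0)"
    using lam by (intro tendsto_intros)
  then have "eventually (\<lambda>n. exp (2 * \<bar>lam n\<bar>) < 2) sequentially"
    by (rule order_tendstoD(2)) simp
  then have small: "eventually (\<lambda>n. exp (2 * \<bar>lam n\<bar>) - 1 \<le> 1) sequentially"
    by (rule eventually_mono) simp
  show ?thesis
  proof (rule SUP_tendsto_zero[OF _ b], goal_cases)
    case 1
    from assms(3) small eventually_choose_two_large[OF assms(1)] show ?case
    proof eventually_elim
      case (elim n)
      then have "real (m n) \<le> real (n choose 2)"
        using assms(1) mult_nonneg_nonneg[of \<delta> "real (n choose 2)"] by (simp add: algebra_simps)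
      then show ?case
        using Gprob_deg_pos_exists[of n "m n" 3] Gcond_exp_deg3_ratio_bound[OF _ assms(1)] elim
        unfolding b_def by auto
    qed
  qed
qed

end
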